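(* Let $(\mathcal{S},d_{\mathcal{S}})$, $(\mathcal{A},d_{\mathcal{A}})$ be metric spaces, $\gamma\in[0,1)$, $\rho$ an initial state distribution, $r$ a reward function, and $\pi,\pi'$ policies and $p,p'$ configurations. Then $$\Big|\mathbb{A}_{\pi,p}^{\pi',p'}-\big(\mathbb{A}_{\pi,p}^{\pi,p'}+\mathbb{A}_{\pi,p}^{\pi',p}\big)\Big|\le\int_{\mathcal{S}}\mu_{\pi,p}(ds)\,\mathcal{W}\big(\pi'(\cdot|s),\pi(\cdot|s)\big)\,\big\|A_{\pi,p}^{\pi,p'}\big\|_L.$$
   Context: $r:\mathcal{S}\times\mathcal{A}\times\mathcal{S}\to\mathbb{R}$. A configuration is a Markov kernel $p(\cdot|s,a)$ on $\mathcal{S}$; a policy is a Markov kernel $\pi(\cdot|s)$ on $\mathcal{A}$; $p_\pi(ds'|s)=\int\pi(da|s)p(ds'|s,a)$. Value functions (assumed well defined): $V_{\pi,p}(s)=\int\pi(da|s)\int p(ds'|s,a)(r(s,a,s')+\gamma V_{\pi,p}(s'))$, $Q_{\pi,p}(s,a)=\int p(ds'|s,a)(r(s,a,s')+\gamma V_{\pi,p}(s'))$, $U_{\pi,p}(s,a,s')=r(s,a,s')+\gamma V_{\pi,p}(s')$. $\mu_{\pi,p}=(1-\gamma)\sum_{t\ge0}\gamma^t\rho p_\pi^t$. Relative advantages: $A_{\pi,p}^{\pi',p}(s)=\int\pi'(da|s)(Q_{\pi,p}(s,a)-V_{\pi,p}(s))$; $A_{\pi,p}^{\pi,p'}(s,a)=\int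 p'(ds'|s,a)(U_{\pi,p}(s,a,s')-Q_{\pi,p}(s,a))$, a function on $\mathcal{S}\times\mathcal{A}$; $A_{\pi,p}^{\pi',p'}(s)=\int\pi'(da|s)\int p'(ds'|s,a)(U_{\pi,p}(s,a,s')-V_{\pi,p}(s))$. Expected versions: $\mathbb{A}_{\pi,p}^{\pi',p}=\int\mu_{\pi,p}(ds)A_{\pi,p}^{\pi',p}(s)$, $\mathbb{A}_{\pi,p}^{\pi,p'}=\int\mu_{\pi,p}(ds)\int\pi(da|s)A_{\pi,p}^{\pi,p'}(s,a)$, $\mathbb{A}_{\pi,p}^{\pi',p'}=\int\mu_{\pi,p}(ds)A_{\pi,p}^{\pi',p'}(s)$. $\|\cdot\|_L$ is the Lipschitz semi-norm, with $\mathcal{S}\times\mathcal{A}$ carrying the metric $d_{\mathcal{S}}(s,\bar s)+d_{\mathcal{A}}(a,\bar a)$; $\mathcal{W}(\mu,\nu)=\sup_{\|f\|_L\le1}|\int f\,d(\mu-\nu)|$. *)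

theory Defs
  imports "HOL-Probability.Probability"
begin

definition markov_kernel :: "'x measure \<Rightarrow> 'y measure \<Rightarrow> ('x \<Rightarrow> 'y measure) \<Rightarrow> bool" where
  "markov_kernel M N K \<longleftrightarrow>
     (\<forall>x\<in>space M. prob_space (K x) \<and> sets (K x) = sets N) \<and> K \<in> M \<rightarrow>\<^sub>M subprob_algebra N"

definition p_pi :: "('s \<Rightarrow> 'a measure) \<Rightarrow> ('s \<Rightarrow> 'a \<Rightarrow> 's measure) \<Rightarrow> 's \<Rightarrow> 's measure" where
  "p_pi pol conf s = pol s \<bind> (\<lambda>a. conf s a)"

definition state_dist :: "'s measure \<Rightarrow> ('s \<Rightarrow> 's measure) \<Rightarrow> nat \<Rightarrow> 's measure" where
  "state_dist rho P t = ((\<lambda>m. m \<bind> P) ^^ t) rho"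

definition occupancy :: "real \<Rightarrow> 's measure \<Rightarrow> ('s \<Rightarrow> 'a measure) \<Rightarrow> ('s \<Rightarrow> 'a \<Rightarrow> 's measure) \<Rightarrow> 's measure" where
  "occupancy \<gamma> rho pol conf = measure_of (space rho) (sets rho)
     (\<lambda>B. ennreal (1 - \<gamma>) * (\<Sum>t. ennreal (\<gamma> ^ t) * emeasure (state_dist rho (p_pi pol conf) t) B))"

definition is_value_fun :: "('s \<Rightarrow> 'a \<Rightarrow> 's \<Rightarrow> real) \<Rightarrow> real \<Rightarrow> ('s \<Rightarrow> 'a measure) \<Rightarrow> ('s \<Rightarrow> 'a \<Rightarrow> 's measure) \<Rightarrow> ('s \<Rightarrow> real) \<Rightarrow> bool" where
  "is_value_fun r \<gamma> pol conf V \<longleftrightarrow>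
     (\<forall>s. V s = (\<integral>a. (\<integral>s'. r s a s' + \<gamma> * V s' \<partial>conf s a) \<partial>pol s))"

definition U_fun :: "('s \<Rightarrow> 'a \<Rightarrow> 's \<Rightarrow> real) \<Rightarrow> real \<Rightarrow> ('s \<Rightarrow> real) \<Rightarrow> 's \<Rightarrow> 'a \<Rightarrow> 's \<Rightarrow> real" where
  "U_fun r \<gamma> V s a s' = r s a s' + \<gamma> * V s'"

definition Q_fun :: "('s \<Rightarrow> 'a \<Rightarrow> 's \<Rightarrow> real) \<Rightarrow> real \<Rightarrow> ('s \<Rightarrow> 'a \<Rightarrow> 's measure) \<Rightarrow> ('s \<Rightarrow> real) \<Rightarrow> 's \<Rightarrow> 'a \<Rightarrow> real" where
  "Q_fun r \<gamma> conf V s a = (\<integral>s'. r s a s' + \<gamma> * V s' \<partial>conf s a)"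

text \<open>Relative advantages. Arguments: reward, discount, (pol, conf) with value function V, new pol' / conf'.\<close>
definition adv_pol :: "('s \<Rightarrow> 'a \<Rightarrow> 's \<Rightarrow> real) \<Rightarrow> real \<Rightarrow> ('s \<Rightarrow> 'a \<Rightarrow> 's measure) \<Rightarrow> ('s \<Rightarrow> real)
    \<Rightarrow> ('s \<Rightarrow> 'a measure) \<Rightarrow> 's \<Rightarrow> real" where
  "adv_pol r \<gamma> conf V pol' s = (\<integral>a. Q_fun r \<gamma> conf V s a - V s \<partial>pol' s)"

definition adv_conf :: "('s \<Rightarrow> 'a \<Rightarrow> 's \<Rightarrow> real) \<Rightarrow> real \<Rightarrow> ('s \<Rightarrow> 'a \<Rightarrow> 's measure) \<Rightarrow> ('s \<Rightarrow> real)
    \<Rightarrow> ('s \<Rightarrow> 'a \<Rightarrow> 's measure) \<Rightarrow> 's \<Rightarrow> 'a \<Rightarrow> real" where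
  "adv_conf r \<gamma> conf V conf' s a = (\<integral>s'. U_fun r \<gamma> V s a s' - Q_fun r \<gamma> conf V s a \<partial>conf' s a)"

definition adv_both :: "('s \<Rightarrow> 'a \<Rightarrow> 's \<Rightarrow> real) \<Rightarrow> real \<Rightarrow> ('s \<Rightarrow> real)
    \<Rightarrow> ('s \<Rightarrow> 'a measure) \<Rightarrow> ('s \<Rightarrow> 'a \<Rightarrow> 's measure) \<Rightarrow> 's \<Rightarrow> real" where
  "adv_both r \<gamma> V pol' conf' s = (\<integral>a. (\<integral>s'. U_fun r \<gamma> V s a s' - V s \<partial>conf' s a) \<partial>pol' s)"

definition lip_norm_SA :: "('s::metric_space \<Rightarrow> 'a::metric_space \<Rightarrow> real) \<Rightarrow> ennreal" where
  "lip_norm_SA g = (INF C \<in> {C::real. 0 \<le> C \<and>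
       (\<forall>s a s0 a0. \<bar>g s a - g s0 a0\<bar> \<le> C * (dist s s0 + dist a a0))}. ennreal C)"

text \<open>Wasserstein-1 distance (Kantorovich dual form), value in [0,\<infinity>].\<close>
definition wasserstein :: "'a::metric_space measure \<Rightarrow> 'a measure \<Rightarrow> ennreal" where
  "wasserstein M N = (SUP f \<in> {f::'a \<Rightarrow> real. \<forall>x y. \<bar>f x - f y\<bar> \<le> dist x y}.
       ennreal \<bar>(\<integral>x. f x \<partial>M) - (\<integral>x. f x \<partial>N)\<bar>)"

end

theory Submission
  imports Defs
begin

text \<open>Subtracting the two one-sided advantages from the joint one leaves, state by state, the
  difference between the integrals of the configuration advantage \<open>A(s, \<cdot>)\<close> under
  \<open>\<pi>'(\<cdot>|s)\<close> and under \<open>\<pi>(\<cdot>|s)\<close>: the baseline cancels because the Bellman equation gives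
  \<open>V(s) = \<integral> Q(s, a) \<pi>(da|s)\<close>. By the dual form of the Wasserstein distance this difference is at
  most \<open>\<W>(\<pi>'(\<cdot>|s), \<pi>(\<cdot>|s))\<close> times the Lipschitz constant of \<open>A(s, \<cdot>)\<close>, which is bounded by
  \<open>\<parallel>A\<parallel>\<^sub>L\<close>. If \<open>\<parallel>A\<parallel>\<^sub>L = \<infinity>\<close> the bound survives the convention \<open>0 \<cdot> \<infinity> = 0\<close>, since
  \<open>\<W>(\<mu>, \<nu>) = 0\<close> forces \<open>\<mu> = \<nu>\<close>: Lipschitz cut-offs of closed sets determine a Borel
  probability measure.\<close>

lemma (in prob_space) integral_diff_const:
  fixes f :: "'a \<Rightarrow> real"
  assumes "integrable M f"
  shows "(\<integral>x. f x - c \<partial>M) = integral\<^sup>L M f - c"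
  using assms by (simp add: Bochner_Integration.integral_diff prob_space)

lemma lipschitz_infdist_cutoff:
  assumes "0 \<le> c"
  shows "\<bar>max 0 (1 - c * infdist x F) - max 0 (1 - c * infdist y F)\<bar> \<le> c * dist x y"
proof -
  have "\<bar>max 0 (1 - u) - max 0 (1 - v)\<bar> \<le> \<bar>u - v\<bar>" for u v :: real
    by (simp add: max_def abs_minus_commute)
  then have "\<bar>max 0 (1 - c * infdist x F) - max 0 (1 - c * infdist y F)\<bar>
      \<le> c * \<bar>infdist x F - infdist y F\<bar>"
    using assms by (metis abs_mult abs_of_nonneg right_diff_distrib)
  also have "\<dots> \<le> c * dist x y"
    using assms by (intro mult_left_mono infdist_triangle_abs)
  finally show ?thesis .
qed

lemma tendsto_infdist_cutoff_indicator:
  assumes F: "closed F" "F \<noteq> {}"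
  shows "(\<lambda>n. max 0 (1 - real (Suc n) * infdist x F)) \<longlonglongrightarrow> indicator F x"
proof (cases "x \<in> F")
  case True
  then show ?thesis by (simp add: in_closed_iff_infdist_zero[OF F])
next
  case False
  then have d: "infdist x F > 0"
    using in_closed_iff_infdist_zero[OF F] infdist_nonneg[of x F] by simp
  then obtain k :: nat where k: "1 < real k * infdist x F"
    using reals_Archimedean3 by blast
  have "1 < real (Suc n) * infdist x F" if "k \<le> n" for n
    using k d that by (smt (verit, best) mult_right_mono of_nat_mono le_SucI)
  then have "eventually (\<lambda>n. max 0 (1 - real (Suc n) * infdist x F) = 0) sequentially"
    unfolding eventually_sequentially by (intro exI[of _ k]) auto
  then show ?thesis
    using False by (simp add: tendsto_eventually)
qed

lemma tendsto_integral_infdist_cutoff: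
  fixes K :: "'a::metric_space measure"
  assumes K: "prob_space K" "sets K = sets borel" and F: "closed F" "F \<noteq> {}"
  shows "(\<lambda>n. \<integral>x. max 0 (1 - real (Suc n) * infdist x F) \<partial>K) \<longlonglongrightarrow> measure K F"
proof -
  interpret prob_space K by (fact K)
  have "(\<lambda>n. \<integral>x. max 0 (1 - real (Suc n) * infdist x F) \<partial>K) \<longlonglongrightarrow> (\<integral>x. indicator F x \<partial>K)"
  proof (rule integral_dominated_convergence[where w="\<lambda>_. 1"])
    have "continuous_on UNIV (\<lambda>x. max 0 (1 - real (Suc n) * infdist x F))" for n
      by (intro continuous_intros)
    then show "(\<lambda>x. max 0 (1 - real (Suc n) * infdist x F)) \<in> borel_measurable K" for n
      unfolding measurable_cong_sets[OF K(2) refl] by (rule borel_measurable_continuous_onI)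
    show "indicator F \<in> borel_measurable K"
      using K(2) borel_closed[OF F(1)] by simp
    show "AE x in K. (\<lambda>n. max 0 (1 - real (Suc n) * infdist x F)) \<longlonglongrightarrow> indicator F x"
      using tendsto_infdist_cutoff_indicator[OF F] by simp
  qed (auto simp: infdist_nonneg)
  then show ?thesis
    using K F by simp
qed

lemma prob_space_eqI_closed:
  fixes M N :: "'a::topological_space measure"
  assumes M: "prob_space M" "sets M = sets borel" and N: "prob_space N" "sets N = sets borel"
    and eq: "\<And>F. closed F \<Longrightarrow> measure M F = measure N F"
  shows "M = N"
proof (rule measure_eqI_generator_eq[where E="Collect closed" and \<Omega>=UNIV and A="\<lambda>_. UNIV"])
  have "sets borel = sigma_sets (UNIV::'a set) (Collect closed)"
    by (metis borel_eq_closed sets_measure_of top_greatest Pow_UNIV)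
  then show "sets M = sigma_sets UNIV (Collect closed)" "sets N = sigma_sets UNIV (Collect closed)"
    using M N by simp_all
  show "emeasure M X = emeasure N X" if "X \<in> Collect closed" for X
    using eq[of X] that M N by (simp add: prob_space.finite_measure finite_measure.emeasure_eq_measure)
qed (use M in \<open>auto simp: Int_stable_def prob_space.finite_measure finite_measure.emeasure_eq_measure\<close>)

lemma wasserstein_eq_0_imp_eq:
  fixes M N :: "'a::metric_space measure"
  assumes M: "prob_space M" "sets M = sets borel" and N: "prob_space N" "sets N = sets borel"
    and W: "wasserstein M N = 0"
  shows "M = N"
proof -
  have lipschitz_eq: "(\<integral>x. f x \<partial>M) = (\<integral>x. f x \<partial>N)" if "\<forall>x y. \<bar>f x - f y\<bar> \<le> dist x y" for f
  proof -
    have "ennreal \<bar>(\<integral>x. f x \<partial>M) - (\<integral>x. f x \<partial>N)\<bar> \<le> wasserstein M N"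
      unfolding wasserstein_def by (rule SUP_upper) (use that in auto)
    then show ?thesis using W by simp
  qed
  have "measure M F = measure N F" if F: "closed F" "F \<noteq> {}" for F
  proof (rule LIMSEQ_unique[OF tendsto_integral_infdist_cutoff[OF M F]])
    have "(\<integral>x. max 0 (1 - real (Suc n) * infdist x F) \<partial>M)
        = (\<integral>x. max 0 (1 - real (Suc n) * infdist x F) \<partial>N)" for n
    proof -
      define f where "f x = max 0 (1 - real (Suc n) * infdist x F) / real (Suc n)" for x
      have "\<bar>f x - f y\<bar> \<le> dist x y" for x y
        using lipschitz_infdist_cutoff[of "real (Suc n)" x F y]
        by (simp add: f_def diff_divide_distrib[symmetric] divide_le_eq mult.commute)
      then have "(\<integral>x. f x \<partial>M) = (\<integral>x. f x \<partial>N)"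
        using lipschitz_eq by blast
      then show ?thesis
        by (simp add: f_def)
    qed
    then show "(\<lambda>n. \<integral>x. max 0 (1 - real (Suc n) * infdist x F) \<partial>M) \<longlonglongrightarrow> measure N F"
      using tendsto_integral_infdist_cutoff[OF N F] by simp
  qed
  then show ?thesis
    using prob_space_eqI_closed[OF M N] by (metis measure_empty)
qed

lemma wasserstein_lipschitz_bound:
  fixes M N :: "'a::metric_space measure" and g :: "'a \<Rightarrow> real"
  assumes M: "prob_space M" and N: "prob_space N"
    and C: "0 \<le> C" and lip: "\<And>a a0. \<bar>g a - g a0\<bar> \<le> C * dist a a0"
  shows "ennreal \<bar>(\<integral>x. g x \<partial>M) - (\<integral>x. g x \<partial>N)\<bar> \<le> wasserstein M N * ennreal C"
proof (cases "C = 0")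
  case True
  then have "g = (\<lambda>_. g undefined)"
    using lip by fastforce
  then have "(\<integral>x. g x \<partial>M) = (\<integral>x. g x \<partial>N)"
    using M N by (metis lebesgue_integral_const prob_space.prob_space scaleR_one)
  then show ?thesis by simp
next
  case False
  with C have C_pos: "C > 0" by simp
  have "ennreal \<bar>(\<integral>x. g x / C \<partial>M) - (\<integral>x. g x / C \<partial>N)\<bar> \<le> wasserstein M N"
    unfolding wasserstein_def
  proof (rule SUP_upper, safe)
    fix x y
    show "\<bar>g x / C - g y / C\<bar> \<le> dist x y"
      using lip[of x y] C_pos by (simp add: diff_divide_distrib[symmetric] divide_le_eq mult.commute)
  qed
  then have "ennreal C * ennreal \<bar>(\<integral>x. g x / C \<partial>M) - (\<integral>x. g x / C \<partial>N)\<bar> \<le> ennreal C * wasserstein M N"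
    by (rule mult_left_mono) simp
  moreover have "ennreal C * ennreal \<bar>(\<integral>x. g x / C \<partial>M) - (\<integral>x. g x / C \<partial>N)\<bar>
      = ennreal \<bar>(\<integral>x. g x \<partial>M) - (\<integral>x. g x \<partial>N)\<bar>"
    using C_pos by (simp add: ennreal_mult[symmetric] abs_mult diff_divide_distrib[symmetric])
  ultimately show ?thesis by (simp add: mult.commute)
qed

lemma lip_norm_SA_finiteE:
  fixes g :: "'s::metric_space \<Rightarrow> 'a::metric_space \<Rightarrow> real"
  assumes "lip_norm_SA g \<noteq> \<top>"
  obtains C where "0 \<le> C" "lip_norm_SA g = ennreal C"
    "\<And>s a s0 a0. \<bar>g s a - g s0 a0\<bar> \<le> C * (dist s s0 + dist a a0)"
proof -
  define S where "S = {C::real. 0 \<le> C \<and>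
    (\<forall>s a s0 a0. \<bar>g s a - g s0 a0\<bar> \<le> C * (dist s s0 + dist a a0))}"
  have lip_norm: "lip_norm_SA g = (INF C\<in>S. ennreal C)"
    by (simp add: lip_norm_SA_def S_def)
  then have "S \<noteq> {}"
    using assms by auto
  have bdd: "bdd_below S"
    unfolding S_def by (rule bdd_belowI[of _ 0]) auto
  have "\<bar>g s a - g s0 a0\<bar> \<le> Inf S * (dist s s0 + dist a a0)" for s a s0 a0
  proof (cases "dist s s0 + dist a a0 = 0")
    case True
    from \<open>S \<noteq> {}\<close> obtain C where "C \<in> S"
      by blast
    then have "\<bar>g s a - g s0 a0\<bar> \<le> C * (dist s s0 + dist a a0)"
      by (simp add: S_def)
    then show ?thesis
      using True by simp
  next
    case False
    then have d_pos: "dist s s0 + dist a a0 > 0"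
      by (simp add: add_nonneg_eq_0_iff order_less_le)
    have "\<bar>g s a - g s0 a0\<bar> / (dist s s0 + dist a a0) \<le> Inf S"
      using \<open>S \<noteq> {}\<close> d_pos by (intro cInf_greatest) (auto simp: S_def divide_le_eq)
    then show ?thesis
      using d_pos by (simp add: divide_le_eq)
  qed
  moreover have "0 \<le> Inf S"
    using \<open>S \<noteq> {}\<close> by (intro cInf_greatest) (auto simp: S_def)
  ultimately have "Inf S \<in> S"
    by (simp add: S_def)
  moreover have "lip_norm_SA g = ennreal (Inf S)"
    unfolding lip_norm
  proof (rule antisym)
    show "(INF C\<in>S. ennreal C) \<le> ennreal (Inf S)"
      by (rule INF_lower[OF \<open>Inf S \<in> S\<close>])
    show "ennreal (Inf S) \<le> (INF C\<in>S. ennreal C)"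
      by (intro INF_greatest ennreal_leI cInf_lower[OF _ bdd])
  qed
  ultimately show ?thesis
    using that[of "Inf S"] by (simp add: S_def)
qed

lemma wasserstein_lip_norm_SA_bound:
  fixes g :: "'s::metric_space \<Rightarrow> 'a::metric_space \<Rightarrow> real"
  assumes M: "prob_space M" "sets M = sets borel" and N: "prob_space N" "sets N = sets borel"
  shows "ennreal \<bar>(\<integral>a. g s a \<partial>M) - (\<integral>a. g s a \<partial>N)\<bar> \<le> wasserstein M N * lip_norm_SA g"
proof (cases "lip_norm_SA g = \<top>")
  case infinite: True
  show ?thesis
  proof (cases "wasserstein M N = 0")
    case True
    then have "M = N"
      using wasserstein_eq_0_imp_eq[OF M N] by blast
    then show ?thesis by simp
  next
    case False
    then show ?thesis
      using infinite by (simp add: ennreal_mult_top)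
  qed
next
  case False
  then obtain C where C: "0 \<le> C" "lip_norm_SA g = ennreal C"
    and lip: "\<And>s a s0 a0. \<bar>g s a - g s0 a0\<bar> \<le> C * (dist s s0 + dist a a0)"
    using lip_norm_SA_finiteE[OF False] by blast
  have "\<bar>g s a - g s a0\<bar> \<le> C * dist a a0" for a a0
    using lip[of s a s a0] by simp
  then show ?thesis
    using wasserstein_lipschitz_bound[OF M(1) N(1) C(1)] C(2) by simp
qed

lemma adv_conf_eq:
  assumes "prob_space (conf' s a)" "integrable (conf' s a) (U_fun r \<gamma> V s a)"
  shows "adv_conf r \<gamma> conf V conf' s a
    = (\<integral>s'. U_fun r \<gamma> V s a s' \<partial>conf' s a) - Q_fun r \<gamma> conf V s a"
  unfolding adv_conf_def using assms by (rule prob_space.integral_diff_const)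

lemma adv_pol_eq:
  assumes "prob_space (pol' s)" "integrable (pol' s) (Q_fun r \<gamma> conf V s)"
  shows "adv_pol r \<gamma> conf V pol' s = (\<integral>a. Q_fun r \<gamma> conf V s a \<partial>pol' s) - V s"
  unfolding adv_pol_def using assms by (rule prob_space.integral_diff_const)

lemma adv_both_eq:
  assumes "prob_space (pol' s)" "\<And>a. prob_space (conf' s a)"
    and "\<And>a. integrable (conf' s a) (U_fun r \<gamma> V s a)"
    and "integrable (pol' s) (\<lambda>a. \<integral>s'. U_fun r \<gamma> V s a s' \<partial>conf' s a)"
  shows "adv_both r \<gamma> V pol' conf' s
    = (\<integral>a. (\<integral>s'. U_fun r \<gamma> V s a s' \<partial>conf' s a) \<partial>pol' s) - V s"
proof -
  have "adv_both r \<gamma> V pol' conf' s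
      = (\<integral>a. (\<integral>s'. U_fun r \<gamma> V s a s' \<partial>conf' s a) - V s \<partial>pol' s)"
    unfolding adv_both_def using assms(2,3)
    by (intro Bochner_Integration.integral_cong refl prob_space.integral_diff_const)
  also have "\<dots> = (\<integral>a. (\<integral>s'. U_fun r \<gamma> V s a s' \<partial>conf' s a) \<partial>pol' s) - V s"
    using assms(1,4) by (rule prob_space.integral_diff_const)
  finally show ?thesis .
qed

lemma adv_both_minus_adv_conf_adv_pol:
  assumes pol': "prob_space (pol' s)" and conf': "\<And>a. prob_space (conf' s a)"
    and V: "V s = (\<integral>a. Q_fun r \<gamma> conf V s a \<partial>pol s)"
    and int_U': "\<And>a. integrable (conf' s a) (U_fun r \<gamma> V s a)"
    and int_Q: "integrable (pol s) (Q_fun r \<gamma> conf V s)"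
    and int_Q': "integrable (pol' s) (Q_fun r \<gamma> conf V s)"
    and int_PU: "integrable (pol s) (\<lambda>a. \<integral>s'. U_fun r \<gamma> V s a s' \<partial>conf' s a)"
    and int_PU': "integrable (pol' s) (\<lambda>a. \<integral>s'. U_fun r \<gamma> V s a s' \<partial>conf' s a)"
  shows "adv_both r \<gamma> V pol' conf' s
      - ((\<integral>a. adv_conf r \<gamma> conf V conf' s a \<partial>pol s) + adv_pol r \<gamma> conf V pol' s)
    = (\<integral>a. adv_conf r \<gamma> conf V conf' s a \<partial>pol' s) - (\<integral>a. adv_conf r \<gamma> conf V conf' s a \<partial>pol s)"
proof -
  define h where "h = (\<lambda>a. \<integral>s'. U_fun r \<gamma> V s a s' \<partial>conf' s a)"
  define q where "q = Q_fun r \<gamma> conf V s"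
  have adv_conf: "adv_conf r \<gamma> conf V conf' s = (\<lambda>a. h a - q a)"
  proof
    fix a
    show "adv_conf r \<gamma> conf V conf' s a = h a - q a"
      using adv_conf_eq[where conf'=conf' and s=s and a=a, OF conf' int_U'] by (simp add: h_def q_def)
  qed
  have "(\<integral>a. adv_conf r \<gamma> conf V conf' s a \<partial>M) = integral\<^sup>L M h - integral\<^sup>L M q"
    if "integrable M h" "integrable M q" for M
    using that by (simp add: adv_conf)
  moreover have "adv_both r \<gamma> V pol' conf' s = integral\<^sup>L (pol' s) h - V s"
    using pol' conf' int_U' int_PU' by (simp add: adv_both_eq h_def)
  moreover have "adv_pol r \<gamma> conf V pol' s = integral\<^sup>L (pol' s) q - V s"
    using pol' int_Q' by (simp add: adv_pol_eq q_def)
  ultimately show ?thesis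
    using V int_Q int_Q' int_PU int_PU' by (simp add: h_def q_def)
qed

theorem lemma4:
  fixes r :: "'s::metric_space \<Rightarrow> 'a::metric_space \<Rightarrow> 's \<Rightarrow> real"
    and \<gamma> :: real
    and rho :: "'s measure"
    and pol pol' :: "'s \<Rightarrow> 'a measure"
    and conf conf' :: "'s \<Rightarrow> 'a \<Rightarrow> 's measure"
    and V :: "'s \<Rightarrow> real"
  assumes gamma: "0 \<le> \<gamma>" "\<gamma> < 1"
    and rho: "prob_space rho" "sets rho = sets borel"
    and r_meas: "(\<lambda>(s, a, s'). r s a s') \<in> borel_measurable borel"
    and pol: "markov_kernel borel borel pol"
    and pol': "markov_kernel borel borel pol'"
    and conf: "markov_kernel borel borel (\<lambda>(s, a). conf s a)"
    and conf': "markov_kernel borel borel (\<lambda>(s, a). conf' s a)"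
    and V: "is_value_fun r \<gamma> pol conf V"
    \<comment> \<open>well-definedness of all integrals involved\<close>
    and int_U: "\<And>s a. integrable (conf s a) (U_fun r \<gamma> V s a)"
    and int_U': "\<And>s a. integrable (conf' s a) (U_fun r \<gamma> V s a)"
    and int_Q: "\<And>s. integrable (pol s) (Q_fun r \<gamma> conf V s)"
    and int_Q': "\<And>s. integrable (pol' s) (Q_fun r \<gamma> conf V s)"
    and int_PU: "\<And>s. integrable (pol s) (\<lambda>a. \<integral>s'. U_fun r \<gamma> V s a s' \<partial>conf' s a)"
    and int_PU': "\<And>s. integrable (pol' s) (\<lambda>a. \<integral>s'. U_fun r \<gamma> V s a s' \<partial>conf' s a)"
    and int_mu1: "integrable (occupancy \<gamma> rho pol conf) (adv_both r \<gamma> V pol' conf')"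
    and int_mu2: "integrable (occupancy \<gamma> rho pol conf)
                    (\<lambda>s. \<integral>a. adv_conf r \<gamma> conf V conf' s a \<partial>pol s)"
    and int_mu3: "integrable (occupancy \<gamma> rho pol conf) (adv_pol r \<gamma> conf V pol')"
  shows "ennreal \<bar>(\<integral>s. adv_both r \<gamma> V pol' conf' s \<partial>occupancy \<gamma> rho pol conf)
            - ((\<integral>s. (\<integral>a. adv_conf r \<gamma> conf V conf' s a \<partial>pol s) \<partial>occupancy \<gamma> rho pol conf)
               + (\<integral>s. adv_pol r \<gamma> conf V pol' s \<partial>occupancy \<gamma> rho pol conf))\<bar>
         \<le> (\<integral>\<^sup>+ s. wasserstein (pol' s) (pol s) * lip_norm_SA (adv_conf r \<gamma> conf V conf')
              \<partial>occupancy \<gamma> rho pol conf)"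
proof -
  let ?\<mu> = "occupancy \<gamma> rho pol conf" and ?A = "adv_conf r \<gamma> conf V conf'"
  define D where "D s = (\<integral>a. ?A s a \<partial>pol' s) - (\<integral>a. ?A s a \<partial>pol s)" for s
  have kernels: "prob_space (pol s)" "sets (pol s) = sets borel"
    "prob_space (pol' s)" "sets (pol' s) = sets borel" "prob_space (conf' s a)" for s a
    using pol pol' conf' by (auto simp: markov_kernel_def)
  have "V s = (\<integral>a. Q_fun r \<gamma> conf V s a \<partial>pol s)" for s
    using V unfolding is_value_fun_def Q_fun_def by blast
  then have D: "(\<lambda>s. adv_both r \<gamma> V pol' conf' s
      - ((\<integral>a. ?A s a \<partial>pol s) + adv_pol r \<gamma> conf V pol' s)) = D"
    unfolding D_def
    by (intro ext adv_both_minus_adv_conf_adv_pol kernels int_U' int_Q int_Q' int_PU int_PU')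
  have integral_D: "(\<integral>s. adv_both r \<gamma> V pol' conf' s \<partial>?\<mu>)
      - ((\<integral>s. (\<integral>a. ?A s a \<partial>pol s) \<partial>?\<mu>) + (\<integral>s. adv_pol r \<gamma> conf V pol' s \<partial>?\<mu>))
    = integral\<^sup>L ?\<mu> D"
    unfolding D[symmetric] using int_mu1 int_mu2 int_mu3 by simp
  have "integrable ?\<mu> D"
    unfolding D[symmetric] using int_mu1 int_mu2 int_mu3 by auto
  then have "ennreal \<bar>integral\<^sup>L ?\<mu> D\<bar> \<le> (\<integral>\<^sup>+ s. ennreal \<bar>D s\<bar> \<partial>?\<mu>)"
    using integral_norm_bound_ennreal by fastforce
  also have "\<dots> \<le> (\<integral>\<^sup>+ s. wasserstein (pol' s) (pol s) * lip_norm_SA ?A \<partial>?\<mu>)"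
    unfolding D_def using kernels by (intro nn_integral_mono wasserstein_lip_norm_SA_bound)
  finally show ?thesis
    unfolding integral_D .
qed

end
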